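(* Let $\Omega\subset\mathbb{R}^d$ be a bounded domain with a mesh $\mathcal{M}$ as described in the context, let $0=t_0<t_1<\dots<t_N=T$ be a uniform time grid with step $\delta t$, and let $\gamma>1$. Let $(\rho_K^n,e_K^n,p_K^n)_{K\in\mathcal{M},0\le n\le N}$ be positive real numbers and $(u_{K,\sigma}^n)$ normal face velocities as in the context, satisfying, for every $K\in\mathcal{M}$ and $0\le n\le N-1$, the implicit scheme \[ \frac{|K|}{\delta t}(\rho_K^{n+1}-\rho_K^n)+\sum_{\sigma\in\mathcal{E}(K)}F_{K,\sigma}^{n+1}=0, \] \[ \frac{|K|}{\delta t}(\rho_K^{n+1}e_K^{n+1}-\rho_K^ne_K^n)+\sum_{\sigma\in\mathcal{E}(K)}F_{K,\sigma}^{n+1}e_\sigma^{n+1}+p_K^{n+1}\sum_{\sigma\in\mathcal{E}(K)}|\sigma|\,u_{K,\sigma}^{n+1}\ge 0, \qquad p_K^{n+1}=(\gamma-1)\rho_K^{n+1}e_K^{n+1}, \] where $F_{K,\sigma}^{n+1}=|\sigma|\,\rho_\sigma^{n+1}u_{K,\sigma}^{n+1}$, and where the face values are upwind: for $\sigma=K|L\in\mathcal{E}_{\rm int}$, $\rho_\sigma^{n+1}=\rho_K^{n+1}$ and $e_\sigma^{n+1}=e_K^{n+1}$ if $u_{K,\sigma}^{n+1}\ge0$, and $\rho_\sigma^{n+1}=\rho_L^{n+1}$, $e_\sigma^{n+1}=e_L^{n+1}$ otherwise. Then for every $K\in\mathcal{M}$ and $0\le n\le N-1$, \[ \frac{|K|}{\delta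 t}(\eta_K^{n+1}-\eta_K^n)+\sum_{\sigma\in\mathcal{E}(K)}|\sigma|\,\eta_\sigma^{n+1}u_{K,\sigma}^{n+1}\le 0, \] where $\eta_K^m=\varphi_\rho(\rho_K^m)+\rho_K^m\varphi_e(e_K^m)$ for $m=n,n+1$, and $\eta_\sigma^{n+1}=\varphi_\rho(\rho_\sigma^{n+1})+\rho_\sigma^{n+1}\varphi_e(e_\sigma^{n+1})$, with $\varphi_\rho(z)=z\log z$ and $\varphi_e(z)=-\frac{1}{\gamma-1}\log z$ for $z>0$.
   Context: Mesh: $\mathcal{M}$ is a finite decomposition of $\Omega$ into polytopal cells $K$, regular in the finite element sense; $\mathcal{E}$ is the set of $(d-1)$-faces, $\mathcal{E}(K)$ the faces of $K$ (bounded in number), $\mathcal{E}_{\rm int}$ the faces interior to $\Omega$, $\mathcal{E}_{\rm ext}$ those on $\partial\Omega$; an interior face separating cells $K$ and $L$ is written $\sigma=K|L$. $|K|$ is the $d$-measure of $K$ and $|\sigma|$ the $(d-1)$-measure of $\sigma$. For each $K$, $\sigma\in\mathcal{E}(K)$ and $n$, $u_{K,\sigma}^n\in\mathbb{R}$ approximates the outward normal velocity on $\sigma$; $u_{K,\sigma}^n=0$ for $\sigma\in\mathcal{E}_{\rm ext}$ (so all face terms on external faces vanish) and $u_{L,\sigma}^n=-u_{K,\sigma}^n$ for $\sigma=K|L$. Face values $\rho_\sigma^n,e_\sigma^n$ depend only on the face $\sigma$ and are positive; all $\rho_K^n,e_K^n$ are positive. *)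

theory Defs
  imports Complex_Main
begin

definition phi_rho :: "real \<Rightarrow> real" where
  "phi_rho z = z * ln z"

definition phi_e :: "real \<Rightarrow> real \<Rightarrow> real" where
  "phi_e \<gamma> z = - (1 / (\<gamma> - 1)) * ln z"

definition eta :: "real \<Rightarrow> real \<Rightarrow> real \<Rightarrow> real" where
  "eta \<gamma> r e = phi_rho r + r * phi_e \<gamma> e"

definition face_between ::
  "'c set \<Rightarrow> ('c \<Rightarrow> 'f set) \<Rightarrow> 'f set \<Rightarrow> 'f \<Rightarrow> 'c \<Rightarrow> 'c \<Rightarrow> bool" where
  "face_between M EK Eint \<sigma> K L \<longleftrightarrow>
     K \<in> M \<and> L \<in> M \<and> K \<noteq> L \<and> \<sigma> \<in> Eint \<and> \<sigma> \<in> EK K \<and> \<sigma> \<in> EK L"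

end

theory Submission
  imports Defs
begin

text \<open>In the conservative variables \<open>(\<rho>, \<rho> e)\<close> the entropy \<open>\<eta>\<close> is convex, so it lies above its
  tangent plane at the new cell state \<open>(\<rho>\<^sub>K, e\<^sub>K)\<close>. Replace every entropy value in the inequality by
  this tangent: this is exact at \<open>(\<rho>\<^sub>K, e\<^sub>K)\<close> itself, hence by upwinding on outflow faces, and an
  upper bound on inflow faces, where the flux is nonpositive. What remains is a linear
  combination of the mass balance and of the internal energy inequality, the latter with the
  negative coefficient \<open>-1/((\<gamma>-1) e\<^sub>K)\<close>; the equation of state makes the pressure work cancel the
  constant term of the tangent.\<close>

definition eta_tangent :: "real \<Rightarrow> real \<Rightarrow> real \<Rightarrow> real \<Rightarrow> real \<Rightarrow> real" where
  "eta_tangent \<gamma> r \<epsilon> a b = (ln r + 1 + (1 - ln \<epsilon>) / (\<gamma> - 1)) * a - a * b / ((\<gamma> - 1) * \<epsilon>) - r"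

text \<open>Naming \<open>1/(\<gamma>-1)\<close> keeps the algebra below free of the side condition \<open>\<gamma> \<noteq> 1\<close>.\<close>

lemma eta_tangent_eq:
  "eta_tangent \<gamma> r \<epsilon> a b = (ln r + 1 + k * (1 - ln \<epsilon>)) * a - k * (a * b / \<epsilon>) - r"
  if "k = 1 / (\<gamma> - 1)"
  using that unfolding eta_tangent_def by simp

lemma eta_eq: "eta \<gamma> a b = a * ln a - k * (a * ln b)" if "k = 1 / (\<gamma> - 1)"
  using that unfolding eta_def phi_rho_def phi_e_def by simp

lemma eta_tangent_self:
  assumes "r > 0" "\<epsilon> > 0"
  shows "eta_tangent \<gamma> r \<epsilon> r \<epsilon> = eta \<gamma> r \<epsilon>"
proof -
  define k where "k = 1 / (\<gamma> - 1)"
  show ?thesis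
    using assms unfolding eta_tangent_eq[OF k_def] eta_eq[OF k_def] by (simp add: field_simps)
qed

lemma eta_ge_tangent:
  assumes "a > 0" "b > 0" "r > 0" "\<epsilon> > 0" "\<gamma> > 1"
  shows "eta_tangent \<gamma> r \<epsilon> a b \<le> eta \<gamma> a b"
proof -
  define k where "k = 1 / (\<gamma> - 1)"
  have ln_r: "ln (r / a) \<le> r / a - 1" and ln_b: "ln (b / \<epsilon>) \<le> b / \<epsilon> - 1"
    using assms by (simp_all add: ln_le_minus_one)
  have gap_a: "0 \<le> a * (ln a - ln r) - a + r"
  proof -
    have "a * ln (r / a) \<le> a * (r / a - 1)" using mult_left_mono[OF ln_r, of a] assms by simp
    then show ?thesis using assms by (simp add: ln_div right_diff_distrib)
  qed
  have gap_b: "0 \<le> k * a * (b / \<epsilon> - 1 - (ln b - ln \<epsilon>))"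
    using ln_b assms by (simp add: k_def ln_div)
  have "eta \<gamma> a b - eta_tangent \<gamma> r \<epsilon> a b
      = (a * (ln a - ln r) - a + r) + k * a * (b / \<epsilon> - 1 - (ln b - ln \<epsilon>))"
    using assms unfolding eta_tangent_eq[OF k_def] eta_eq[OF k_def]
    by (simp add: field_simps)
  with gap_a gap_b show ?thesis by linarith
qed

lemma upwind_flux_eta_le_tangent:
  assumes "a > 0" "b > 0" "r > 0" "\<epsilon> > 0" "\<gamma> > 1"
    and upwind: "0 < u \<Longrightarrow> a = r \<and> b = \<epsilon>"
  shows "u * eta \<gamma> a b \<le> u * eta_tangent \<gamma> r \<epsilon> a b"
proof (cases "0 < u")
  case True
  then show ?thesis using upwind eta_tangent_self assms by simp
next
  case False
  then show ?thesis using eta_ge_tangent[OF assms(1-5)] by (simp add: mult_left_mono_neg)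
qed

lemma cell_entropy_inequality:
  fixes S :: "'f set" and area rf ef u :: "'f \<Rightarrow> real"
  assumes "\<gamma> > 1" "V \<ge> 0" "r > 0" "\<epsilon> > 0" "r0 > 0" "\<epsilon>0 > 0"
    and face_pos: "\<And>\<sigma>. \<sigma> \<in> S \<Longrightarrow> area \<sigma> \<ge> 0 \<and> rf \<sigma> > 0 \<and> ef \<sigma> > 0"
    and upwind: "\<And>\<sigma>. \<sigma> \<in> S \<Longrightarrow> 0 < u \<sigma> \<Longrightarrow> rf \<sigma> = r \<and> ef \<sigma> = \<epsilon>"
    and mass: "V * (r - r0) + (\<Sum>\<sigma>\<in>S. area \<sigma> * rf \<sigma> * u \<sigma>) = 0"
    and energy: "V * (r * \<epsilon> - r0 * \<epsilon>0) + (\<Sum>\<sigma>\<in>S. area \<sigma> * rf \<sigma> * u \<sigma> * ef \<sigma>)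
        + p * (\<Sum>\<sigma>\<in>S. area \<sigma> * u \<sigma>) \<ge> 0"
    and eos: "p = (\<gamma> - 1) * r * \<epsilon>"
  shows "V * (eta \<gamma> r \<epsilon> - eta \<gamma> r0 \<epsilon>0) + (\<Sum>\<sigma>\<in>S. area \<sigma> * eta \<gamma> (rf \<sigma>) (ef \<sigma>) * u \<sigma>) \<le> 0"
proof -
  define k where "k = 1 / (\<gamma> - 1)"
  define c where "c = ln r + 1 + k * (1 - ln \<epsilon>)"
  define d where "d = k / \<epsilon>"
  have tangent: "eta_tangent \<gamma> r \<epsilon> a b = c * a - d * (a * b) - r" for a b
    unfolding eta_tangent_eq[OF k_def] c_def d_def by simp
  have d_nonneg: "d \<ge> 0" and pressure: "d * p = r"
    using assms(1,4) eos by (simp_all add: d_def k_def)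
  let ?F = "\<lambda>\<sigma>. area \<sigma> * rf \<sigma> * u \<sigma>"
  let ?G = "\<lambda>\<sigma>. area \<sigma> * rf \<sigma> * u \<sigma> * ef \<sigma>"
  let ?H = "\<lambda>\<sigma>. area \<sigma> * u \<sigma>"
  have face_bound: "area \<sigma> * eta \<gamma> (rf \<sigma>) (ef \<sigma>) * u \<sigma> \<le> c * ?F \<sigma> - d * ?G \<sigma> - r * ?H \<sigma>"
    if "\<sigma> \<in> S" for \<sigma>
  proof -
    have "u \<sigma> * eta \<gamma> (rf \<sigma>) (ef \<sigma>) \<le> u \<sigma> * eta_tangent \<gamma> r \<epsilon> (rf \<sigma>) (ef \<sigma>)"
      using upwind_flux_eta_le_tangent face_pos upwind that assms(1,3,4) by blast
    from mult_left_mono[OF this, of "area \<sigma>"] show ?thesis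
      using face_pos that by (simp add: tangent algebra_simps)
  qed
  have "(\<Sum>\<sigma>\<in>S. area \<sigma> * eta \<gamma> (rf \<sigma>) (ef \<sigma>) * u \<sigma>) \<le> (\<Sum>\<sigma>\<in>S. c * ?F \<sigma> - d * ?G \<sigma> - r * ?H \<sigma>)"
    using face_bound by (rule sum_mono)
  also have "\<dots> = c * sum ?F S - d * sum ?G S - r * sum ?H S"
    by (simp only: sum_subtractf sum_distrib_left)
  finally have faces: "(\<Sum>\<sigma>\<in>S. area \<sigma> * eta \<gamma> (rf \<sigma>) (ef \<sigma>) * u \<sigma>)
      \<le> c * sum ?F S - d * sum ?G S - r * sum ?H S" .
  have "eta \<gamma> r \<epsilon> - eta \<gamma> r0 \<epsilon>0 \<le> eta_tangent \<gamma> r \<epsilon> r \<epsilon> - eta_tangent \<gamma> r \<epsilon> r0 \<epsilon>0"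
    using assms eta_ge_tangent[of r0 \<epsilon>0 r \<epsilon> \<gamma>] eta_tangent_self[of r \<epsilon> \<gamma>] by simp
  from mult_left_mono[OF this assms(2)]
  have cell: "V * (eta \<gamma> r \<epsilon> - eta \<gamma> r0 \<epsilon>0) \<le> V * (c * (r - r0) - d * (r * \<epsilon> - r0 * \<epsilon>0))"
    by (simp add: tangent algebra_simps)
  have "V * (eta \<gamma> r \<epsilon> - eta \<gamma> r0 \<epsilon>0) + (\<Sum>\<sigma>\<in>S. area \<sigma> * eta \<gamma> (rf \<sigma>) (ef \<sigma>) * u \<sigma>)
      \<le> V * (c * (r - r0) - d * (r * \<epsilon> - r0 * \<epsilon>0)) + (c * sum ?F S - d * sum ?G S - d * p * sum ?H S)"
    using cell faces pressure by simp
  also have "\<dots> = c * (V * (r - r0) + sum ?F S)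
      - d * (V * (r * \<epsilon> - r0 * \<epsilon>0) + sum ?G S + p * sum ?H S)"
    by (simp add: algebra_simps)
  also have "\<dots> \<le> 0"
    using mass energy d_nonneg by simp
  finally show ?thesis .
qed

theorem theorem2p3:
  fixes M :: "'c set" and E Eint :: "'f set" and EK :: "'c \<Rightarrow> 'f set"
    and vol :: "'c \<Rightarrow> real" and area :: "'f \<Rightarrow> real"
    and N :: nat and dt T \<gamma> :: real
    and rho e p :: "nat \<Rightarrow> 'c \<Rightarrow> real"
    and u :: "nat \<Rightarrow> 'c \<Rightarrow> 'f \<Rightarrow> real"
    and rhof ef :: "nat \<Rightarrow> 'f \<Rightarrow> real"
  assumes finM: "finite M" and finE: "finite E"
    and EK_sub: "\<forall>K\<in>M. EK K \<subseteq> E" and Eint_sub: "Eint \<subseteq> E"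
    and interior: "\<forall>K\<in>M. \<forall>\<sigma>\<in>EK K \<inter> Eint. \<exists>!L. face_between M EK Eint \<sigma> K L"
    and vol_pos: "\<forall>K\<in>M. vol K > 0"
    and area_pos: "\<forall>\<sigma>\<in>E. area \<sigma> > 0"
    and dt_pos: "dt > 0" and T_def: "T = real N * dt"
    and gamma: "\<gamma> > 1"
    and u_ext: "\<forall>n. \<forall>K\<in>M. \<forall>\<sigma>\<in>EK K. \<sigma> \<notin> Eint \<longrightarrow> u n K \<sigma> = 0"
    and u_anti: "\<forall>n \<sigma> K L. face_between M EK Eint \<sigma> K L \<longrightarrow> u n L \<sigma> = - u n K \<sigma>"
    and rho_pos: "\<forall>n\<le>N. \<forall>K\<in>M. rho n K > 0"
    and e_pos: "\<forall>n\<le>N. \<forall>K\<in>M. e n K > 0"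
    and p_pos: "\<forall>n\<le>N. \<forall>K\<in>M. p n K > 0"
    and rhof_pos: "\<forall>n\<le>N. \<forall>\<sigma>\<in>E. rhof n \<sigma> > 0"
    and ef_pos: "\<forall>n\<le>N. \<forall>\<sigma>\<in>E. ef n \<sigma> > 0"
    and upwind: "\<forall>n<N. \<forall>\<sigma> K L. face_between M EK Eint \<sigma> K L \<longrightarrow>
        (u (Suc n) K \<sigma> > 0 \<longrightarrow> rhof (Suc n) \<sigma> = rho (Suc n) K \<and> ef (Suc n) \<sigma> = e (Suc n) K) \<and>
        (u (Suc n) K \<sigma> = 0 \<longrightarrow>
           (rhof (Suc n) \<sigma> = rho (Suc n) K \<and> ef (Suc n) \<sigma> = e (Suc n) K) \<or>
           (rhof (Suc n) \<sigma> = rho (Suc n) L \<and> ef (Suc n) \<sigma> = e (Suc n) L))"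
    and mass: "\<forall>K\<in>M. \<forall>n<N.
        vol K / dt * (rho (Suc n) K - rho n K)
        + (\<Sum>\<sigma>\<in>EK K. area \<sigma> * rhof (Suc n) \<sigma> * u (Suc n) K \<sigma>) = 0"
    and energy: "\<forall>K\<in>M. \<forall>n<N.
        vol K / dt * (rho (Suc n) K * e (Suc n) K - rho n K * e n K)
        + (\<Sum>\<sigma>\<in>EK K. area \<sigma> * rhof (Suc n) \<sigma> * u (Suc n) K \<sigma> * ef (Suc n) \<sigma>)
        + p (Suc n) K * (\<Sum>\<sigma>\<in>EK K. area \<sigma> * u (Suc n) K \<sigma>) \<ge> 0"
    and eos: "\<forall>K\<in>M. \<forall>n<N. p (Suc n) K = (\<gamma> - 1) * rho (Suc n) K * e (Suc n) K"
  shows "\<forall>K\<in>M. \<forall>n<N.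
        vol K / dt * (eta \<gamma> (rho (Suc n) K) (e (Suc n) K) - eta \<gamma> (rho n K) (e n K))
        + (\<Sum>\<sigma>\<in>EK K. area \<sigma> * eta \<gamma> (rhof (Suc n) \<sigma>) (ef (Suc n) \<sigma>) * u (Suc n) K \<sigma>) \<le> 0"
proof (intro ballI allI impI)
  fix K n assume K: "K \<in> M" and n: "n < N"
  then have time_steps: "n \<le> N" "Suc n \<le> N" by simp_all
  have faces: "area \<sigma> \<ge> 0 \<and> rhof (Suc n) \<sigma> > 0 \<and> ef (Suc n) \<sigma> > 0" if "\<sigma> \<in> EK K" for \<sigma>
  proof -
    have "\<sigma> \<in> E" using EK_sub K that by blast
    then show ?thesis using area_pos rhof_pos ef_pos time_steps by (simp add: less_imp_le)
  qed
  have upwind_K: "rhof (Suc n) \<sigma> = rho (Suc n) K \<and> ef (Suc n) \<sigma> = e (Suc n) K"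
    if "\<sigma> \<in> EK K" and "0 < u (Suc n) K \<sigma>" for \<sigma>
  proof -
    have "\<sigma> \<in> Eint"
    proof (rule ccontr)
      assume "\<sigma> \<notin> Eint"
      with that(2) show False using u_ext[rule_format, OF K that(1)] by simp
    qed
    with interior K that(1) have "\<exists>!L. face_between M EK Eint \<sigma> K L" by simp
    then obtain L where "face_between M EK Eint \<sigma> K L" by auto
    from conjunct1[OF upwind[rule_format, OF n this]] that(2) show ?thesis ..
  qed
  have V_nonneg: "vol K / dt \<ge> 0" using vol_pos[rule_format, OF K] dt_pos by simp
  have states: "rho (Suc n) K > 0" "e (Suc n) K > 0" "rho n K > 0" "e n K > 0"
    using rho_pos e_pos K time_steps by simp_all
  show "vol K / dt * (eta \<gamma> (rho (Suc n) K) (e (Suc n) K) - eta \<gamma> (rho n K) (e n K))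
      + (\<Sum>\<sigma>\<in>EK K. area \<sigma> * eta \<gamma> (rhof (Suc n) \<sigma>) (ef (Suc n) \<sigma>) * u (Suc n) K \<sigma>) \<le> 0"
    using cell_entropy_inequality[OF gamma V_nonneg states faces upwind_K
        mass[rule_format, OF K n] energy[rule_format, OF K n] eos[rule_format, OF K n]] .
qed

end
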